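(* Let $V$ be a set of $n$ vertices. Suppose each unordered pair of distinct vertices of $V$ is assigned exactly one of: a red color together with a direction, the color blue, the color green, or a purple color together with a direction; suppose there are $2\alpha\binom n2$ red pairs, $\beta\binom n2$ blue pairs, $\gamma\binom n2$ green pairs and $2\delta\binom n2$ purple pairs. Let $T_g$ be the number of $3$-subsets all of whose pairs are green; $T_p$ the number of $3$-subsets $\{x,y,z\}$ all of whose pairs are purple and directed cyclically ($x\to y\to z\to x$ or reverse); and $T_c$ the number of $3$-subsets $\{x,y,z\}$ ("cherries") such that, for some labeling, $\{y,z\}$ is blue and $\{x,y\},\{x,z\}$ are red directed $y\to x$ and $z\to x$. Then: (1) $T_g\le\gamma^{3/2}n^3/6$; (2) $T_p\le2\delta^{3/2}n^3/6$; (3) $T_c\le3\alpha\sqrt\beta\, n^3/6$; (4) $T_c\le0.465\,n^3/6$; (5) $T_p+\tfrac14(T_g+T_c)\le\tfrac14\,n^3/6$; (6) $T_c\le\dfrac{3\alpha\beta}{\alpha+\beta}\,n^3/6$, where $\frac{\alpha\beta}{\alpha+\beta}$ is read as $0$ if $\alpha=\beta=0$. *)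

theory Defs
  imports Complex_Main
begin

datatype colour = Red | Blue | Green | Purple

definition valid_colouring :: "'a set \<Rightarrow> ('a \<Rightarrow> 'a \<Rightarrow> colour) \<Rightarrow> ('a \<Rightarrow> 'a \<Rightarrow> bool) \<Rightarrow> bool" where
  "valid_colouring V col arc \<longleftrightarrow>
     (\<forall>x\<in>V. \<forall>y\<in>V. x \<noteq> y \<longrightarrow>
        col x y = col y x \<and>
        (col x y \<in> {Red, Purple} \<longrightarrow> (arc x y \<longleftrightarrow> \<not> arc y x)))"

definition col_pairs :: "'a set \<Rightarrow> ('a \<Rightarrow> 'a \<Rightarrow> colour) \<Rightarrow> colour \<Rightarrow> 'a set set" where
  "col_pairs V col k = {{x, y} | x y. x \<in> V \<and> y \<in> V \<and> x \<noteq> y \<and> col x y = k}"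

definition green_triangles :: "'a set \<Rightarrow> ('a \<Rightarrow> 'a \<Rightarrow> colour) \<Rightarrow> 'a set set" where
  "green_triangles V col = {S. S \<subseteq> V \<and> card S = 3 \<and>
      (\<forall>x\<in>S. \<forall>y\<in>S. x \<noteq> y \<longrightarrow> col x y = Green)}"

definition purple_cyclic_triangles ::
  "'a set \<Rightarrow> ('a \<Rightarrow> 'a \<Rightarrow> colour) \<Rightarrow> ('a \<Rightarrow> 'a \<Rightarrow> bool) \<Rightarrow> 'a set set" where
  "purple_cyclic_triangles V col arc = {S. S \<subseteq> V \<and> card S = 3 \<and>
      (\<exists>x y z. S = {x, y, z} \<and> x \<noteq> y \<and> y \<noteq> z \<and> x \<noteq> z \<and>
         col x y = Purple \<and> col y z = Purple \<and> col x z = Purple \<and>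
         ((arc x y \<and> arc y z \<and> arc z x) \<or> (arc y x \<and> arc z y \<and> arc x z)))}"

definition cherries ::
  "'a set \<Rightarrow> ('a \<Rightarrow> 'a \<Rightarrow> colour) \<Rightarrow> ('a \<Rightarrow> 'a \<Rightarrow> bool) \<Rightarrow> 'a set set" where
  "cherries V col arc = {S. S \<subseteq> V \<and> card S = 3 \<and>
      (\<exists>x y z. S = {x, y, z} \<and> x \<noteq> y \<and> y \<noteq> z \<and> x \<noteq> z \<and>
         col y z = Blue \<and> col x y = Red \<and> col x z = Red \<and> arc y x \<and> arc z x)}"

end

theory Submission
  imports Defs "HOL-Analysis.Convex"
begin

text \<open>
  Encode the colouring by 0/1 matrices on ordered pairs, one per colour and one per orientation
  of the red and purple pairs; their total masses are the densities times \<open>n (n - 1)\<close>. Each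
  count is bounded by a sum over ordered triples of a nonnegative weight that gives every
  counted 3-set at least a fixed amount over its six orderings.

  For green and purple cyclic triangles the weight is \<open>A x y A y z A z x\<close>; its sum is a trace,
  at most the cube of the Frobenius norm of \<open>A\<close> by Cauchy-Schwarz. Cherries are handled in the
  same way with the blue matrix and two copies of the red one, or, for the bound with
  \<open>\<alpha> \<beta> / (\<alpha> + \<beta>)\<close>, by bounding the cherries at a blue vertex by the product of its red
  out-degree and blue degree and using that \<open>a b / (a + b)\<close> is superadditive.

  The other two bounds use the weight \<open>1 - (\<phi> x y \<phi> x z + \<phi> y x \<phi> y z + \<phi> z x \<phi> z y)\<close> on
  distinct triples, for a matrix \<open>\<phi>\<close> with zero diagonal and entries in \<open>[-1, 1]\<close>. Its total is
  at most \<open>n (n - 1) (n - 2) + 3 n (n - 1) \<le> n\<^sup>3\<close>, because the products of off-diagonal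
  entries of a row sum to at least minus the sum of their squares, and a finite case check
  shows that it is nonnegative. With \<open>\<phi>\<close> the red orientation minus a multiple of blue, each
  cherry weighs \<open>6 \<cdot> 269/125\<close>; with \<open>\<phi>\<close> the purple orientation, each cyclic purple
  triangle weighs 24 and each 3-set without purple pairs weighs 6.
\<close>

section \<open>Sums over ordered pairs and triples\<close>

lemma real_choose_two: "real (n choose 2) = real n * (real n - 1) / 2"
proof -
  have "even (n * (n - 1))" by auto
  then have "real (n choose 2) = real (n * (n - 1)) / 2"
    by (simp add: choose_two real_of_nat_div)
  then show ?thesis
    by (cases n) (simp_all add: algebra_simps)
qed

lemma sum_ordered_pairs_eq_twice_card:
  assumes "finite V" and sym: "\<And>x y. x \<in> V \<Longrightarrow> y \<in> V \<Longrightarrow> P x y = P y x"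
  shows "(\<Sum>x\<in>V. \<Sum>y\<in>V. of_bool (x \<noteq> y \<and> P x y) :: real)
         = 2 * real (card {{x, y} | x y. x \<in> V \<and> y \<in> V \<and> x \<noteq> y \<and> P x y})"
proof -
  define A where "A = {p \<in> V \<times> V. fst p \<noteq> snd p \<and> P (fst p) (snd p)}"
  define E where "E = {{x, y} | x y. x \<in> V \<and> y \<in> V \<and> x \<noteq> y \<and> P x y}"
  define edge where "edge = (\<lambda>(x::'a, y). {x, y})"
  have "finite E"
    by (rule finite_subset[of _ "Pow V"]) (use assms(1) in \<open>auto simp: E_def\<close>)
  have fibre: "{p \<in> A. edge p = e} = {(x, y), (y, x)}"
    if "x \<in> V" "y \<in> V" "x \<noteq> y" "P x y" "e = {x, y}" for x y e
    using that sym by (auto simp: A_def edge_def doubleton_eq_iff)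
  have "(\<Sum>x\<in>V. \<Sum>y\<in>V. of_bool (x \<noteq> y \<and> P x y) :: real)
      = (\<Sum>p\<in>V \<times> V. if fst p \<noteq> snd p \<and> P (fst p) (snd p) then 1 else 0)"
    by (simp add: sum.cartesian_product split_def of_bool_def)
  also have "\<dots> = real (card A)"
    using assms(1) by (simp add: A_def flip: sum.inter_filter)
  also have "\<dots> = (\<Sum>e\<in>E. real (card {p \<in> A. edge p = e}))"
    using sum.group[of A E edge "\<lambda>_. 1 :: real"] \<open>finite E\<close> assms(1)
    by (force simp: A_def E_def edge_def)
  also have "\<dots> = (\<Sum>e\<in>E. 2)"
    by (rule sum.cong) (auto simp: E_def fibre)
  finally show ?thesis by (simp add: E_def)
qed

lemma sum_triple_rotate:
  "(\<Sum>x\<in>V. \<Sum>y\<in>V. \<Sum>z\<in>V. f x y z) = (\<Sum>x\<in>V. \<Sum>y\<in>V. \<Sum>z\<in>V. f y z x)"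
proof -
  have "(\<Sum>x\<in>V. \<Sum>y\<in>V. \<Sum>z\<in>V. f y z x) = (\<Sum>y\<in>V. \<Sum>x\<in>V. \<Sum>z\<in>V. f y z x)"
    by (rule sum.swap)
  also have "\<dots> = (\<Sum>y\<in>V. \<Sum>z\<in>V. \<Sum>x\<in>V. f y z x)"
    by (rule sum.cong[OF refl], rule sum.swap)
  finally show ?thesis
    by simp
qed

lemma sum_distinct_triples:
  assumes "finite V"
  shows "(\<Sum>x\<in>V. \<Sum>y\<in>V. \<Sum>z\<in>V. of_bool (x \<noteq> y \<and> y \<noteq> z \<and> x \<noteq> z) :: real)
    = real (card V) * (real (card V) - 1) * (real (card V) - 2)"
proof -
  have "(\<Sum>z\<in>V. of_bool (x \<noteq> y \<and> y \<noteq> z \<and> x \<noteq> z) :: real)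
      = of_bool (x \<noteq> y) * (real (card V) - 2)" if "x \<in> V" "y \<in> V" for x y
  proof -
    have "x \<noteq> y \<Longrightarrow> V \<inter> {z. y \<noteq> z \<and> x \<noteq> z} = V - {x, y}"
      by auto
    moreover have "x \<noteq> y \<Longrightarrow> card {x, y} \<le> card V"
      using assms that by (intro card_mono) auto
    ultimately show ?thesis
      using assms that by (simp add: card_Diff_subset of_nat_diff)
  qed
  moreover have "(\<Sum>y\<in>V. of_bool (x \<noteq> y) * (real (card V) - 2))
      = (real (card V) - 1) * (real (card V) - 2)" if "x \<in> V" for x
  proof -
    have "V \<inter> {y. x \<noteq> y} = V - {x}"
      by auto
    moreover have "0 < card V"
      using assms that card_gt_0_iff by blast
    ultimately show ?thesis
      using assms that by (simp add: sum_distrib_right card_Diff_subset of_nat_diff)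
  qed
  ultimately show ?thesis
    by simp
qed

definition sum_orderings :: "('a \<Rightarrow> 'a \<Rightarrow> 'a \<Rightarrow> real) \<Rightarrow> 'a \<Rightarrow> 'a \<Rightarrow> 'a \<Rightarrow> real" where
  "sum_orderings h x y z = h x y z + h x z y + h y x z + h y z x + h z x y + h z y x"

lemma sum_3sets_le_sum_triples:
  fixes c :: "'a set \<Rightarrow> real" and h :: "'a \<Rightarrow> 'a \<Rightarrow> 'a \<Rightarrow> real"
  assumes fin: "finite V" and F: "F \<subseteq> Pow V"
    and h_nonneg: "\<And>x y z. x \<in> V \<Longrightarrow> y \<in> V \<Longrightarrow> z \<in> V \<Longrightarrow> 0 \<le> h x y z"
    and c_le: "\<And>S. S \<in> F \<Longrightarrow>
      \<exists>x y z. S = {x, y, z} \<and> x \<noteq> y \<and> y \<noteq> z \<and> x \<noteq> z \<and> c S \<le> sum_orderings h x y z"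
  shows "(\<Sum>S\<in>F. c S) \<le> (\<Sum>x\<in>V. \<Sum>y\<in>V. \<Sum>z\<in>V. h x y z)"
proof -
  define T where "T = V \<times> V \<times> V"
  define H where "H = (\<lambda>(x, y, z). h x y z)"
  define vertices where "vertices = (\<lambda>(x::'a, y::'a, z::'a). {x, y, z})"
  define A where "A = {t \<in> T. vertices t \<in> F}"
  have "finite F" using F fin by (meson finite_Pow_iff finite_subset)
  have H_nonneg: "t \<in> T \<Longrightarrow> 0 \<le> H t" for t
    using h_nonneg by (auto simp: T_def H_def)
  have c_le_fibre: "c S \<le> (\<Sum>t\<in>{t \<in> A. vertices t = S}. H t)" if SF: "S \<in> F" for S
  proof -
    obtain x y z where S: "S = {x, y, z}" "x \<noteq> y" "y \<noteq> z" "x \<noteq> z"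
      and c: "c S \<le> sum_orderings h x y z"
      using c_le[OF SF] by blast
    let ?P = "{(x,y,z), (x,z,y), (y,x,z), (y,z,x), (z,x,y), (z,y,x)}"
    have "sum_orderings h x y z = (\<Sum>t\<in>?P. H t)"
      using S by (simp add: sum_orderings_def H_def add.assoc)
    also have "\<dots> \<le> (\<Sum>t\<in>{t \<in> A. vertices t = S}. H t)"
      using SF F S fin H_nonneg
      by (intro sum_mono2) (auto simp: A_def T_def vertices_def insert_commute)
    finally show ?thesis using c by linarith
  qed
  have "(\<Sum>S\<in>F. c S) \<le> (\<Sum>S\<in>F. \<Sum>t\<in>{t \<in> A. vertices t = S}. H t)"
    by (rule sum_mono) (rule c_le_fibre)
  also have "\<dots> = (\<Sum>t\<in>A. H t)"
    by (rule sum.group) (use fin \<open>finite F\<close> in \<open>auto simp: A_def T_def\<close>)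
  also have "\<dots> \<le> (\<Sum>t\<in>T. H t)"
    by (rule sum_mono2) (use fin H_nonneg in \<open>auto simp: A_def T_def\<close>)
  also have "\<dots> = (\<Sum>x\<in>V. \<Sum>y\<in>V. \<Sum>z\<in>V. h x y z)"
    by (simp add: T_def H_def sum.cartesian_product split_def)
  finally show ?thesis .
qed

section \<open>Frobenius norms\<close>

definition frobenius_norm :: "'a set \<Rightarrow> ('a \<Rightarrow> 'a \<Rightarrow> real) \<Rightarrow> real" where
  "frobenius_norm V A = sqrt (\<Sum>i\<in>V. \<Sum>j\<in>V. (A i j)\<^sup>2)"

lemma frobenius_norm_nonneg: "0 \<le> frobenius_norm V A"
  by (simp add: frobenius_norm_def sum_nonneg)

lemma frobenius_norm_transpose: "frobenius_norm V (\<lambda>i j. A j i) = frobenius_norm V A"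
  unfolding frobenius_norm_def by (subst sum.swap) (rule refl)

lemma frobenius_norm_idempotent_entries:
  assumes "\<And>i j. (A i j)\<^sup>2 = A i j"
  shows "frobenius_norm V A = sqrt (\<Sum>i\<in>V. \<Sum>j\<in>V. A i j)"
  by (simp add: frobenius_norm_def assms)

lemma sum_mult_le_sqrt_sum_squares:
  fixes a b :: "'i \<Rightarrow> real"
  shows "(\<Sum>i\<in>I. a i * b i) \<le> sqrt (\<Sum>i\<in>I. (a i)\<^sup>2) * sqrt (\<Sum>i\<in>I. (b i)\<^sup>2)"
proof -
  have "(\<Sum>i\<in>I. a i * b i) \<le> sqrt ((\<Sum>i\<in>I. a i * b i)\<^sup>2)"
    by simp
  also have "\<dots> \<le> sqrt ((\<Sum>i\<in>I. (a i)\<^sup>2) * (\<Sum>i\<in>I. (b i)\<^sup>2))"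
    by (rule real_sqrt_le_mono, rule Cauchy_Schwarz_ineq_sum)
  finally show ?thesis
    by (simp add: real_sqrt_mult)
qed

lemma sum_entrywise_product_le_frobenius_norm:
  "(\<Sum>u\<in>V. \<Sum>v\<in>V. B u v * C u v) \<le> frobenius_norm V B * frobenius_norm V C"
  using sum_mult_le_sqrt_sum_squares[of "\<lambda>(u, v). B u v" "\<lambda>(u, v). C u v" "V \<times> V"]
  unfolding frobenius_norm_def sum.cartesian_product by (simp add: case_prod_beta)

lemma frobenius_norm_matrix_product_le:
  "frobenius_norm V (\<lambda>u v. \<Sum>w\<in>V. X u w * Y w v) \<le> frobenius_norm V X * frobenius_norm V Y"
proof -
  have "(\<Sum>u\<in>V. \<Sum>v\<in>V. (\<Sum>w\<in>V. X u w * Y w v)\<^sup>2)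
      \<le> (\<Sum>u\<in>V. \<Sum>v\<in>V. (\<Sum>w\<in>V. (X u w)\<^sup>2) * (\<Sum>w\<in>V. (Y w v)\<^sup>2))"
    by (intro sum_mono Cauchy_Schwarz_ineq_sum)
  also have "\<dots> = (\<Sum>u\<in>V. \<Sum>w\<in>V. (X u w)\<^sup>2) * (\<Sum>v\<in>V. \<Sum>w\<in>V. (Y w v)\<^sup>2)"
    by (rule sum_product[symmetric])
  also have "(\<Sum>v\<in>V. \<Sum>w\<in>V. (Y w v)\<^sup>2) = (\<Sum>w\<in>V. \<Sum>v\<in>V. (Y w v)\<^sup>2)"
    by (rule sum.swap)
  finally show ?thesis
    unfolding frobenius_norm_def real_sqrt_mult[symmetric] by (rule real_sqrt_le_mono)
qed

lemma sum_trace_product_le: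
  "(\<Sum>u\<in>V. \<Sum>v\<in>V. B u v * (\<Sum>w\<in>V. X u w * Y w v))
     \<le> frobenius_norm V B * frobenius_norm V X * frobenius_norm V Y"
proof -
  have "(\<Sum>u\<in>V. \<Sum>v\<in>V. B u v * (\<Sum>w\<in>V. X u w * Y w v))
      \<le> frobenius_norm V B * frobenius_norm V (\<lambda>u v. \<Sum>w\<in>V. X u w * Y w v)"
    by (rule sum_entrywise_product_le_frobenius_norm)
  also have "\<dots> \<le> frobenius_norm V B * (frobenius_norm V X * frobenius_norm V Y)"
    by (rule mult_left_mono[OF frobenius_norm_matrix_product_le frobenius_norm_nonneg])
  finally show ?thesis
    by (simp add: mult.assoc)
qed

lemma sum_cyclic_products_le:
  "(\<Sum>x\<in>V. \<Sum>y\<in>V. \<Sum>z\<in>V. A x y * A y z * A z x) \<le> frobenius_norm V A ^ 3"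
proof -
  have "(\<Sum>y\<in>V. \<Sum>z\<in>V. A x y * A y z * A z x) = (\<Sum>z\<in>V. A z x * (\<Sum>y\<in>V. A x y * A y z))"
    for x
    by (subst sum.swap) (simp add: sum_distrib_left mult.commute)
  then have "(\<Sum>x\<in>V. \<Sum>y\<in>V. \<Sum>z\<in>V. A x y * A y z * A z x)
      = (\<Sum>x\<in>V. \<Sum>z\<in>V. A z x * (\<Sum>y\<in>V. A x y * A y z))"
    by simp
  also have "\<dots> \<le> frobenius_norm V (\<lambda>x z. A z x) * frobenius_norm V A * frobenius_norm V A"
    by (rule sum_trace_product_le)
  finally show ?thesis
    using frobenius_norm_transpose[of V A] by (simp add: power3_eq_cube)
qed

section \<open>Parallel sums\<close>

text \<open>Division by zero makes \<open>parallel_sum 0 0 = 0\<close>, the value the theorem assigns to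
  \<open>\<alpha> \<beta> / (\<alpha> + \<beta>)\<close> when \<open>\<alpha> = \<beta> = 0\<close>.\<close>

definition parallel_sum :: "real \<Rightarrow> real \<Rightarrow> real" where
  "parallel_sum a b = a * b / (a + b)"

lemma parallel_sum_nonneg: "0 \<le> a \<Longrightarrow> 0 \<le> b \<Longrightarrow> 0 \<le> parallel_sum a b"
  by (simp add: parallel_sum_def)

lemma parallel_sum_scale: "parallel_sum (k * a) (k * b) = k * parallel_sum a b"
  by (cases "k = 0") (simp_all add: parallel_sum_def flip: distrib_left)

lemma parallel_sum_superadditive:
  assumes "0 \<le> a" "0 \<le> b" "0 \<le> c" "0 \<le> d"
  shows "parallel_sum a b + parallel_sum c d \<le> parallel_sum (a + c) (b + d)"
proof (cases "a + b = 0 \<or> c + d = 0")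
  case True
  with assms show ?thesis
    by (auto simp: parallel_sum_def add_nonneg_eq_0_iff)
next
  case False
  with assms have pos: "0 < a + b" "0 < c + d"
    by auto
  define X where "X = a * b * (c + d) + c * d * (a + b)"
  define Y where "Y = (a + c) * (b + d)"
  have "X * (a + c + (b + d)) + (a * d - b * c)\<^sup>2 = Y * ((a + b) * (c + d))"
    by (simp add: X_def Y_def power2_eq_square algebra_simps)
  then have "X * (a + c + (b + d)) \<le> Y * ((a + b) * (c + d))"
    by (smt (verit) zero_le_power2)
  then have "X / ((a + b) * (c + d)) \<le> Y / (a + c + (b + d))"
    using pos by (simp add: divide_simps)
  moreover have "X / ((a + b) * (c + d)) = parallel_sum a b + parallel_sum c d"
    using pos by (simp add: X_def parallel_sum_def field_simps)
  ultimately show ?thesis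
    by (simp add: Y_def parallel_sum_def)
qed

lemma sum_parallel_sum_le:
  assumes "finite I" and "\<And>i. i \<in> I \<Longrightarrow> 0 \<le> a i \<and> 0 \<le> b i"
  shows "(\<Sum>i\<in>I. parallel_sum (a i) (b i)) \<le> parallel_sum (\<Sum>i\<in>I. a i) (\<Sum>i\<in>I. b i)"
  using assms
proof (induction I rule: finite_induct)
  case empty
  then show ?case
    by (simp add: parallel_sum_def)
next
  case (insert i I)
  then have "(\<Sum>j\<in>insert i I. parallel_sum (a j) (b j))
      \<le> parallel_sum (a i) (b i) + parallel_sum (\<Sum>j\<in>I. a j) (\<Sum>j\<in>I. b j)"
    by simp
  also have "\<dots> \<le> parallel_sum (a i + (\<Sum>j\<in>I. a j)) (b i + (\<Sum>j\<in>I. b j))"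
    using insert.prems by (intro parallel_sum_superadditive) (auto intro: sum_nonneg)
  finally show ?case
    using insert.hyps by simp
qed

lemma mult_le_parallel_sum:
  assumes "0 \<le> a" "0 \<le> b" "a + b \<le> n"
  shows "a * b \<le> n * parallel_sum a b"
proof (cases "a + b = 0")
  case True
  with assms have "a = 0" "b = 0"
    by linarith+
  then show ?thesis
    by (simp add: parallel_sum_def)
next
  case False
  with assms have "a * b = (a + b) * parallel_sum a b"
    by (simp add: parallel_sum_def)
  also have "\<dots> \<le> n * parallel_sum a b"
    using assms by (intro mult_right_mono parallel_sum_nonneg)
  finally show ?thesis .
qed

lemma sum_mult_le_parallel_sum:
  assumes "finite I" and "\<And>i. i \<in> I \<Longrightarrow> 0 \<le> a i \<and> 0 \<le> b i \<and> a i + b i \<le> n"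
  shows "(\<Sum>i\<in>I. a i * b i) \<le> n * parallel_sum (\<Sum>i\<in>I. a i) (\<Sum>i\<in>I. b i)"
proof (cases "I = {}")
  case True
  then show ?thesis
    by (simp add: parallel_sum_def)
next
  case False
  then obtain i where "i \<in> I"
    by blast
  with assms(2) have "0 \<le> n"
    by (meson add_nonneg_nonneg order_trans)
  have "(\<Sum>i\<in>I. a i * b i) \<le> (\<Sum>i\<in>I. n * parallel_sum (a i) (b i))"
    using assms(2) by (intro sum_mono mult_le_parallel_sum) auto
  also have "\<dots> \<le> n * parallel_sum (\<Sum>i\<in>I. a i) (\<Sum>i\<in>I. b i)"
    unfolding sum_distrib_left[symmetric]
    using assms \<open>0 \<le> n\<close> by (intro mult_left_mono sum_parallel_sum_le) auto
  finally show ?thesis .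
qed

section \<open>Vertex products\<close>

lemma sum_offdiagonal_products_ge:
  fixes a :: "'a \<Rightarrow> real"
  assumes "finite V"
  shows "- (\<Sum>y\<in>V. (a y)\<^sup>2) \<le> (\<Sum>y\<in>V. \<Sum>z\<in>V. of_bool (y \<noteq> z) * (a y * a z))"
proof -
  have "(\<Sum>z\<in>V. of_bool (y \<noteq> z) * (a y * a z)) = (\<Sum>z\<in>V. a y * a z) - (a y)\<^sup>2"
    if "y \<in> V" for y
  proof -
    have "V \<inter> {z. y \<noteq> z} = V - {y}"
      by auto
    then show ?thesis
      using assms that by (simp add: sum_diff1 power2_eq_square)
  qed
  then have "(\<Sum>y\<in>V. \<Sum>z\<in>V. of_bool (y \<noteq> z) * (a y * a z))
      = (\<Sum>y\<in>V. a y)\<^sup>2 - (\<Sum>y\<in>V. (a y)\<^sup>2)"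
    by (simp add: sum_subtractf power2_eq_square sum_product)
  then show ?thesis
    by simp
qed

definition vertex_products :: "('a \<Rightarrow> 'a \<Rightarrow> real) \<Rightarrow> 'a \<Rightarrow> 'a \<Rightarrow> 'a \<Rightarrow> real" where
  "vertex_products \<phi> x y z = \<phi> x y * \<phi> x z + \<phi> y x * \<phi> y z + \<phi> z x * \<phi> z y"

lemma sum_distinct_row_products_ge:
  fixes \<phi> :: "'a \<Rightarrow> 'a \<Rightarrow> real"
  assumes fin: "finite V" and x: "x \<in> V" and diag: "\<phi> x x = 0" and bound: "\<And>y. \<bar>\<phi> x y\<bar> \<le> 1"
  shows "- (real (card V) - 1)
    \<le> (\<Sum>y\<in>V. \<Sum>z\<in>V. of_bool (x \<noteq> y \<and> y \<noteq> z \<and> x \<noteq> z) * (\<phi> x y * \<phi> x z))"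
proof -
  have distinct_eq: "of_bool (x \<noteq> y \<and> y \<noteq> z \<and> x \<noteq> z) * (\<phi> x y * \<phi> x z)
      = of_bool (y \<noteq> z) * (\<phi> x y * \<phi> x z)" for y z
    using diag by auto
  have "1 \<le> card V"
    using fin x by (auto simp: Suc_le_eq card_gt_0_iff)
  have "(\<Sum>y\<in>V. (\<phi> x y)\<^sup>2) = (\<Sum>y\<in>V - {x}. (\<phi> x y)\<^sup>2)"
    using fin x by (simp add: sum_diff1 diag)
  also have "\<dots> \<le> (\<Sum>y\<in>V - {x}. 1)"
    by (intro sum_mono) (simp add: abs_square_le_1 bound)
  also have "\<dots> = real (card V) - 1"
    using fin x \<open>1 \<le> card V\<close> by (simp add: of_nat_diff)
  finally show ?thesis
    using sum_offdiagonal_products_ge[OF fin, of "\<phi> x"] by (simp add: distinct_eq)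
qed

text \<open>By the symmetry of the distinctness condition, the three summands of \<open>vertex_products\<close>
  have equal sums over distinct triples.\<close>

lemma sum_distinct_vertex_products_ge:
  fixes \<phi> :: "'a \<Rightarrow> 'a \<Rightarrow> real"
  assumes fin: "finite V" and diag: "\<And>x. \<phi> x x = 0" and bound: "\<And>x y. \<bar>\<phi> x y\<bar> \<le> 1"
  shows "- 3 * (real (card V) * (real (card V) - 1))
    \<le> (\<Sum>x\<in>V. \<Sum>y\<in>V. \<Sum>z\<in>V. of_bool (x \<noteq> y \<and> y \<noteq> z \<and> x \<noteq> z) * vertex_products \<phi> x y z)"
proof -
  define D :: "'a \<Rightarrow> 'a \<Rightarrow> 'a \<Rightarrow> real" where
    "D x y z = of_bool (x \<noteq> y \<and> y \<noteq> z \<and> x \<noteq> z)" for x y z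
  define K where "K = (\<Sum>x\<in>V. \<Sum>y\<in>V. \<Sum>z\<in>V. D x y z * (\<phi> x y * \<phi> x z))"
  have D_sym: "D y x z = D x y z" "D y z x = D x y z" for x y z
    by (auto simp: D_def)
  have "(\<Sum>x\<in>V. \<Sum>y\<in>V. \<Sum>z\<in>V. D x y z * (\<phi> y x * \<phi> y z)) = K"
    unfolding K_def by (subst sum.swap) (simp add: D_sym)
  moreover have "(\<Sum>x\<in>V. \<Sum>y\<in>V. \<Sum>z\<in>V. D x y z * (\<phi> z x * \<phi> z y)) = K"
    unfolding K_def by (subst sum_triple_rotate) (simp add: D_sym)
  ultimately have total: "(\<Sum>x\<in>V. \<Sum>y\<in>V. \<Sum>z\<in>V. D x y z * vertex_products \<phi> x y z) = 3 * K"
    by (simp add: K_def vertex_products_def distrib_left sum.distrib)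
  have "(\<Sum>x\<in>V. - (real (card V) - 1)) \<le> K"
    unfolding K_def D_def using sum_distinct_row_products_ge[OF fin _ diag bound] by (rule sum_mono)
  then have "- (real (card V) * (real (card V) - 1)) \<le> K"
    by (simp add: algebra_simps)
  then show ?thesis
    using total unfolding D_def by linarith
qed

lemma sum_distinct_one_minus_vertex_products_le:
  fixes \<phi> :: "'a \<Rightarrow> 'a \<Rightarrow> real"
  assumes "finite V" and "\<And>x. \<phi> x x = 0" and "\<And>x y. \<bar>\<phi> x y\<bar> \<le> 1"
  shows "(\<Sum>x\<in>V. \<Sum>y\<in>V. \<Sum>z\<in>V.
      of_bool (x \<noteq> y \<and> y \<noteq> z \<and> x \<noteq> z) * (1 - vertex_products \<phi> x y z)) \<le> real (card V) ^ 3"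
proof -
  let ?n = "real (card V)"
  have "(\<Sum>x\<in>V. \<Sum>y\<in>V. \<Sum>z\<in>V.
      of_bool (x \<noteq> y \<and> y \<noteq> z \<and> x \<noteq> z) * (1 - vertex_products \<phi> x y z))
    = (\<Sum>x\<in>V. \<Sum>y\<in>V. \<Sum>z\<in>V. of_bool (x \<noteq> y \<and> y \<noteq> z \<and> x \<noteq> z))
      - (\<Sum>x\<in>V. \<Sum>y\<in>V. \<Sum>z\<in>V.
          of_bool (x \<noteq> y \<and> y \<noteq> z \<and> x \<noteq> z) * vertex_products \<phi> x y z)"
    by (simp add: right_diff_distrib sum_subtractf)
  also have "\<dots> \<le> ?n * (?n - 1) * (?n - 2) + 3 * (?n * (?n - 1))"
    using sum_distinct_triples[OF assms(1)] sum_distinct_vertex_products_ge[of V \<phi>, OF assms] by linarith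
  also have "\<dots> = ?n ^ 3 - ?n"
    by (simp add: power3_eq_cube algebra_simps)
  finally show ?thesis
    by simp
qed

lemma sum_3sets_le_cube:
  fixes \<phi> :: "'a \<Rightarrow> 'a \<Rightarrow> real" and c :: "'a set \<Rightarrow> real"
  assumes fin: "finite V" and F: "F \<subseteq> Pow V"
    and diag: "\<And>x. \<phi> x x = 0" and bound: "\<And>x y. \<bar>\<phi> x y\<bar> \<le> 1"
    and vp_le: "\<And>x y z. x \<in> V \<Longrightarrow> y \<in> V \<Longrightarrow> z \<in> V \<Longrightarrow> vertex_products \<phi> x y z \<le> 1"
    and c_le: "\<And>S. S \<in> F \<Longrightarrow> \<exists>x y z. S = {x, y, z} \<and> x \<noteq> y \<and> y \<noteq> z \<and> x \<noteq> z
      \<and> c S \<le> 6 * (1 - vertex_products \<phi> x y z)"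
  shows "(\<Sum>S\<in>F. c S) \<le> real (card V) ^ 3"
proof -
  define h where "h x y z = of_bool (x \<noteq> y \<and> y \<noteq> z \<and> x \<noteq> z) * (1 - vertex_products \<phi> x y z)"
    for x y z
  have orderings: "sum_orderings h x y z = 6 * (1 - vertex_products \<phi> x y z)"
    if "x \<noteq> y" "y \<noteq> z" "x \<noteq> z" for x y z
    using that by (simp add: sum_orderings_def h_def vertex_products_def algebra_simps)
  have "\<exists>x y z. S = {x, y, z} \<and> x \<noteq> y \<and> y \<noteq> z \<and> x \<noteq> z
      \<and> c S \<le> sum_orderings h x y z" if "S \<in> F" for S
  proof -
    obtain x y z where S: "S = {x, y, z}" "x \<noteq> y" "y \<noteq> z" "x \<noteq> z"
      and "c S \<le> 6 * (1 - vertex_products \<phi> x y z)"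
      using c_le[OF \<open>S \<in> F\<close>] by blast
    moreover have "sum_orderings h x y z = 6 * (1 - vertex_products \<phi> x y z)"
      using orderings S(2-4) .
    ultimately have "c S \<le> sum_orderings h x y z"
      by simp
    with S show ?thesis
      by (intro exI[of _ x] exI[of _ y] exI[of _ z]) simp
  qed
  moreover have "0 \<le> h x y z" if "x \<in> V" "y \<in> V" "z \<in> V" for x y z
    using vp_le[OF that] by (simp add: h_def)
  ultimately have "(\<Sum>S\<in>F. c S) \<le> (\<Sum>x\<in>V. \<Sum>y\<in>V. \<Sum>z\<in>V. h x y z)"
    using sum_3sets_le_sum_triples[OF fin F] by blast
  also have "\<dots> \<le> real (card V) ^ 3"
    unfolding h_def by (rule sum_distinct_one_minus_vertex_products_le[OF fin diag bound])
  finally show ?thesis .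
qed

lemma valid_colouring_sym:
  "valid_colouring V col arc \<Longrightarrow> x \<in> V \<Longrightarrow> y \<in> V \<Longrightarrow> col y x = col x y"
  unfolding valid_colouring_def by (cases "x = y") auto

lemma valid_colouring_arc:
  "valid_colouring V col arc \<Longrightarrow> x \<in> V \<Longrightarrow> y \<in> V \<Longrightarrow> x \<noteq> y \<Longrightarrow> col x y \<in> {Red, Purple}
    \<Longrightarrow> arc x y \<longleftrightarrow> \<not> arc y x"
  unfolding valid_colouring_def by blast

definition colour_weight :: "('a \<Rightarrow> 'a \<Rightarrow> colour) \<Rightarrow> colour \<Rightarrow> 'a \<Rightarrow> 'a \<Rightarrow> real" where
  "colour_weight col k x y = of_bool (x \<noteq> y \<and> col x y = k)"

definition arc_weight ::
  "('a \<Rightarrow> 'a \<Rightarrow> colour) \<Rightarrow> ('a \<Rightarrow> 'a \<Rightarrow> bool) \<Rightarrow> colour \<Rightarrow> 'a \<Rightarrow> 'a \<Rightarrow> real" where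
  "arc_weight col arc k x y = of_bool (x \<noteq> y \<and> col x y = k \<and> arc x y)"

lemma sum_colour_weight:
  assumes "finite V" and "valid_colouring V col arc"
  shows "(\<Sum>x\<in>V. \<Sum>y\<in>V. colour_weight col k x y) = 2 * real (card (col_pairs V col k))"
  unfolding colour_weight_def col_pairs_def
  using assms valid_colouring_sym by (intro sum_ordered_pairs_eq_twice_card) fastforce+

lemma sum_arc_weight:
  assumes fin: "finite V" and valid: "valid_colouring V col arc" and k: "k \<in> {Red, Purple}"
  shows "(\<Sum>x\<in>V. \<Sum>y\<in>V. arc_weight col arc k x y) = real (card (col_pairs V col k))"
proof -
  have "colour_weight col k x y = arc_weight col arc k x y + arc_weight col arc k y x"
    if "x \<in> V" "y \<in> V" for x y
    using valid_colouring_sym[OF valid that] valid_colouring_arc[OF valid that] k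
    by (auto simp: colour_weight_def arc_weight_def)
  then have "(\<Sum>x\<in>V. \<Sum>y\<in>V. colour_weight col k x y)
      = (\<Sum>x\<in>V. \<Sum>y\<in>V. arc_weight col arc k x y) + (\<Sum>x\<in>V. \<Sum>y\<in>V. arc_weight col arc k y x)"
    by (simp add: sum.distrib)
  also have "(\<Sum>x\<in>V. \<Sum>y\<in>V. arc_weight col arc k y x) = (\<Sum>x\<in>V. \<Sum>y\<in>V. arc_weight col arc k x y)"
    by (rule sum.swap)
  finally show ?thesis
    using sum_colour_weight[OF fin valid, of k] by simp
qed

lemma density_nonneg:
  assumes "2 \<le> card V" and "real m = c * real (card V choose 2)"
  shows "0 \<le> c"
proof -
  have "0 < real (card V choose 2)"
    using assms(1) by simp
  with assms(2) show ?thesis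
    by (metis of_nat_0_le_iff zero_le_mult_iff linorder_not_le)
qed

lemma sum_colour_weight_density:
  assumes "finite V" and "valid_colouring V col arc"
    and "real (card (col_pairs V col k)) = c * real (card V choose 2)"
  shows "(\<Sum>x\<in>V. \<Sum>y\<in>V. colour_weight col k x y) = c * (real (card V) * (real (card V) - 1))"
  using assms by (simp add: sum_colour_weight real_choose_two)

lemma sum_arc_weight_density:
  assumes "finite V" and "valid_colouring V col arc" and "k \<in> {Red, Purple}"
    and "real (card (col_pairs V col k)) = 2 * c * real (card V choose 2)"
  shows "(\<Sum>x\<in>V. \<Sum>y\<in>V. arc_weight col arc k x y) = c * (real (card V) * (real (card V) - 1))"
  using assms by (simp add: sum_arc_weight real_choose_two)

lemma ordered_pairs_three_halves_le_cube:
  "real n * (real n - 1) * sqrt (real n * (real n - 1)) \<le> real n ^ 3"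
proof -
  let ?m = "real n * (real n - 1)"
  have m_le: "?m \<le> real n ^ 2"
    by (simp add: power2_eq_square algebra_simps)
  have "0 \<le> ?m"
    by (cases n) auto
  have "sqrt ?m \<le> real n"
    using real_sqrt_le_mono[OF m_le] by simp
  then have "?m * sqrt ?m \<le> real n ^ 2 * real n"
    using \<open>0 \<le> ?m\<close> by (intro mult_mono[OF m_le]) auto
  then show ?thesis
    by (simp add: power2_eq_square power3_eq_cube)
qed

lemma sqrt_density_cube_le:
  assumes "0 \<le> c"
  shows "sqrt (c * (real n * (real n - 1))) ^ 3 \<le> c powr (3/2) * real n ^ 3"
proof -
  let ?m = "real n * (real n - 1)"
  have "0 \<le> ?m"
    by (cases n) auto
  with assms have "sqrt (c * ?m) ^ 3 = (c * ?m) * sqrt (c * ?m)"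
    by (simp add: power3_eq_cube)
  also have "\<dots> = (c * sqrt c) * (?m * sqrt ?m)"
    by (simp only: real_sqrt_mult[of c ?m] ac_simps)
  also have "\<dots> \<le> (c * sqrt c) * real n ^ 3"
    using assms by (intro mult_left_mono ordered_pairs_three_halves_le_cube) auto
  also have "c * sqrt c = c powr (3/2)"
  proof -
    have "c powr (3/2) = c powr (1 + 1/2)"
      by simp
    also have "\<dots> = c * sqrt c"
      using assms by (simp only: powr_add powr_half_sqrt powr_one)
    finally show ?thesis ..
  qed
  finally show ?thesis .
qed

section \<open>Triangles and cherries\<close>

lemma purple_cyclic_triangleE:
  assumes valid: "valid_colouring V col arc" and "S \<in> purple_cyclic_triangles V col arc"
  obtains x y z where "S = {x, y, z}" "x \<in> V" "y \<in> V" "z \<in> V" "x \<noteq> y" "y \<noteq> z" "x \<noteq> z"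
    "col x y = Purple" "col y z = Purple" "col z x = Purple" "arc x y" "arc y z" "arc z x"
proof -
  obtain x y z where S: "S = {x, y, z}" "x \<in> V" "y \<in> V" "z \<in> V" "x \<noteq> y" "y \<noteq> z" "x \<noteq> z"
    and colours: "col x y = Purple" "col y z = Purple" "col x z = Purple"
    and arcs: "(arc x y \<and> arc y z \<and> arc z x) \<or> (arc y x \<and> arc z y \<and> arc x z)"
    using assms(2) unfolding purple_cyclic_triangles_def by auto
  have "col z x = Purple" "col y x = Purple" "col z y = Purple"
    using colours valid_colouring_sym[OF valid] S(2-4) by metis+
  show ?thesis
    using arcs
  proof
    assume "arc x y \<and> arc y z \<and> arc z x"
    with S colours \<open>col z x = Purple\<close> show ?thesis
      by (intro that[of x y z]) auto
  next
    assume "arc y x \<and> arc z y \<and> arc x z"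
    moreover have "S = {x, z, y}"
      using S(1) by auto
    ultimately show ?thesis
      using S colours \<open>col y x = Purple\<close> \<open>col z y = Purple\<close>
      by (intro that[of x z y]) auto
  qed
qed

lemma cherryE:
  assumes valid: "valid_colouring V col arc" and "S \<in> cherries V col arc"
  obtains x y z where "S = {x, y, z}" "x \<in> V" "y \<in> V" "z \<in> V" "x \<noteq> y" "y \<noteq> z" "x \<noteq> z"
    "col y z = Blue" "col z y = Blue" "col x y = Red" "col y x = Red" "col x z = Red" "col z x = Red"
    "arc y x" "arc z x" "\<not> arc x y" "\<not> arc x z"
proof -
  obtain x y z where S: "S = {x, y, z}" "x \<in> V" "y \<in> V" "z \<in> V" "x \<noteq> y" "y \<noteq> z" "x \<noteq> z"
    and colours: "col y z = Blue" "col x y = Red" "col x z = Red" and arcs: "arc y x" "arc z x"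
    using assms(2) unfolding cherries_def by auto
  moreover have "col z y = Blue" "col y x = Red" "col z x = Red"
    using valid_colouring_sym[OF valid] S(2-4) colours by metis+
  moreover have "\<not> arc x y" "\<not> arc x z"
    using valid_colouring_arc[OF valid S(2,3,5)] valid_colouring_arc[OF valid S(2,4,7)]
      colours arcs by auto
  ultimately show ?thesis
    using that by blast
qed

lemma green_triangle_or_cherryE:
  assumes "S \<in> green_triangles V col \<union> cherries V col arc"
  obtains x y z where "S = {x, y, z}" "x \<in> V" "y \<in> V" "z \<in> V" "x \<noteq> y" "y \<noteq> z" "x \<noteq> z"
    "col x y \<noteq> Purple" "col y z \<noteq> Purple" "col x z \<noteq> Purple"
proof (cases "S \<in> green_triangles V col")
  case True
  then obtain x y z where S: "S = {x, y, z}" "x \<noteq> y" "y \<noteq> z" "x \<noteq> z" and "S \<subseteq> V"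
    unfolding green_triangles_def card_3_iff by blast
  moreover have "\<forall>u\<in>S. \<forall>v\<in>S. u \<noteq> v \<longrightarrow> col u v = Green"
    using True unfolding green_triangles_def by blast
  ultimately show ?thesis
    by (intro that[of x y z]) auto
next
  case False
  with assms obtain x y z where "S = {x, y, z}" "S \<subseteq> V" "x \<noteq> y" "y \<noteq> z" "x \<noteq> z"
    "col y z = Blue" "col x y = Red" "col x z = Red"
    unfolding cherries_def by blast
  then show ?thesis
    by (intro that[of x y z]) auto
qed

lemma purple_cyclic_triangles_disjoint:
  assumes valid: "valid_colouring V col arc"
  shows "purple_cyclic_triangles V col arc \<inter> (green_triangles V col \<union> cherries V col arc) = {}"
proof -
  have False if P: "S \<in> purple_cyclic_triangles V col arc"
    and GC: "S \<in> green_triangles V col \<union> cherries V col arc" for S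
  proof -
    have all_purple: "col u v = Purple" if "u \<in> S" "v \<in> S" "u \<noteq> v" for u v
    proof -
      obtain x y z where "S = {x, y, z}" "x \<in> V" "y \<in> V" "z \<in> V"
        and "col x y = Purple" "col y z = Purple" "col z x = Purple"
        using valid P by (rule purple_cyclic_triangleE)
      with that show ?thesis
        using valid_colouring_sym[OF valid] by auto
    qed
    obtain x y where "x \<in> S" "y \<in> S" "x \<noteq> y" "col x y \<noteq> Purple"
      using GC by (rule green_triangle_or_cherryE) auto
    with all_purple show False
      by blast
  qed
  then show ?thesis
    by blast
qed

lemma green_triangles_cherries_disjoint: "green_triangles V col \<inter> cherries V col arc = {}"
  unfolding green_triangles_def cherries_def by fastforce

lemma card_green_triangles_le:
  assumes fin: "finite V" and n2: "2 \<le> card V" and valid: "valid_colouring V col arc"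
    and green: "real (card (col_pairs V col Green)) = \<gamma> * real (card V choose 2)"
  shows "real (card (green_triangles V col)) \<le> \<gamma> powr (3/2) * real (card V) ^ 3 / 6"
proof -
  let ?g = "colour_weight col Green"
  have "(\<Sum>S\<in>green_triangles V col. 6) \<le> (\<Sum>x\<in>V. \<Sum>y\<in>V. \<Sum>z\<in>V. ?g x y * ?g y z * ?g z x)"
  proof (rule sum_3sets_le_sum_triples[OF fin])
    fix S
    assume S: "S \<in> green_triangles V col"
    then obtain x y z where xyz: "S = {x, y, z}" "x \<noteq> y" "y \<noteq> z" "x \<noteq> z"
      unfolding green_triangles_def card_3_iff by blast
    have green_pairs: "col u v = Green" if "u \<in> S" "v \<in> S" "u \<noteq> v" for u v
      using S that unfolding green_triangles_def by blast
    have "col x y = Green" "col y x = Green" "col y z = Green" "col z y = Green"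
      "col x z = Green" "col z x = Green"
      using xyz by (simp_all add: green_pairs)
    with xyz have "sum_orderings (\<lambda>x y z. ?g x y * ?g y z * ?g z x) x y z = 6"
      by (simp add: sum_orderings_def colour_weight_def)
    with xyz show "\<exists>x y z. S = {x, y, z} \<and> x \<noteq> y \<and> y \<noteq> z \<and> x \<noteq> z
        \<and> 6 \<le> sum_orderings (\<lambda>x y z. ?g x y * ?g y z * ?g z x) x y z"
      by (intro exI[of _ x] exI[of _ y] exI[of _ z]) simp
  qed (auto simp: green_triangles_def colour_weight_def)
  also have "\<dots> \<le> frobenius_norm V ?g ^ 3"
    by (rule sum_cyclic_products_le)
  also have "\<dots> = sqrt (\<gamma> * (real (card V) * (real (card V) - 1))) ^ 3"
    using sum_colour_weight_density[OF fin valid green]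
    by (simp add: frobenius_norm_idempotent_entries colour_weight_def)
  also have "\<dots> \<le> \<gamma> powr (3/2) * real (card V) ^ 3"
    by (rule sqrt_density_cube_le) (rule density_nonneg[OF n2 green])
  finally show ?thesis
    by simp
qed

lemma card_purple_cyclic_triangles_le:
  assumes fin: "finite V" and n2: "2 \<le> card V" and valid: "valid_colouring V col arc"
    and purple: "real (card (col_pairs V col Purple)) = 2 * \<delta> * real (card V choose 2)"
  shows "real (card (purple_cyclic_triangles V col arc)) \<le> 2 * \<delta> powr (3/2) * real (card V) ^ 3 / 6"
proof -
  let ?p = "arc_weight col arc Purple"
  have "(\<Sum>S\<in>purple_cyclic_triangles V col arc. 3) \<le> (\<Sum>x\<in>V. \<Sum>y\<in>V. \<Sum>z\<in>V. ?p x y * ?p y z * ?p z x)"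
  proof (rule sum_3sets_le_sum_triples[OF fin])
    fix S
    assume "S \<in> purple_cyclic_triangles V col arc"
    then obtain x y z where S: "S = {x, y, z}" "x \<in> V" "y \<in> V" "z \<in> V" "x \<noteq> y" "y \<noteq> z" "x \<noteq> z"
      and "col x y = Purple" "col y z = Purple" "col z x = Purple" "arc x y" "arc y z" "arc z x"
      by (rule purple_cyclic_triangleE[OF valid])
    then have "3 \<le> sum_orderings (\<lambda>x y z. ?p x y * ?p y z * ?p z x) x y z"
      by (auto simp: sum_orderings_def arc_weight_def)
    with S show "\<exists>x y z. S = {x, y, z} \<and> x \<noteq> y \<and> y \<noteq> z \<and> x \<noteq> z
        \<and> 3 \<le> sum_orderings (\<lambda>x y z. ?p x y * ?p y z * ?p z x) x y z"
      by blast
  qed (auto simp: purple_cyclic_triangles_def arc_weight_def)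
  also have "\<dots> \<le> frobenius_norm V ?p ^ 3"
    by (rule sum_cyclic_products_le)
  also have "\<dots> = sqrt (\<delta> * (real (card V) * (real (card V) - 1))) ^ 3"
    using sum_arc_weight_density[OF fin valid _ purple]
    by (simp add: frobenius_norm_idempotent_entries arc_weight_def)
  also have "\<dots> \<le> \<delta> powr (3/2) * real (card V) ^ 3"
    by (rule sqrt_density_cube_le) (use density_nonneg[OF n2 purple] in simp)
  finally show ?thesis
    by (simp add: algebra_simps)
qed

lemma two_card_cherries_le:
  assumes fin: "finite V" and valid: "valid_colouring V col arc"
  shows "2 * real (card (cherries V col arc))
    \<le> (\<Sum>y\<in>V. \<Sum>z\<in>V. colour_weight col Blue y z
          * (\<Sum>x\<in>V. arc_weight col arc Red y x * arc_weight col arc Red z x))"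
proof -
  let ?r = "arc_weight col arc Red" and ?b = "colour_weight col Blue"
  let ?h = "\<lambda>x y z. ?r y x * ?r z x * ?b y z"
  have "(\<Sum>S\<in>cherries V col arc. 2) \<le> (\<Sum>x\<in>V. \<Sum>y\<in>V. \<Sum>z\<in>V. ?h x y z)"
  proof (rule sum_3sets_le_sum_triples[OF fin])
    fix S
    assume "S \<in> cherries V col arc"
    then obtain x y z where S: "S = {x, y, z}" "x \<noteq> y" "y \<noteq> z" "x \<noteq> z"
      and "col y z = Blue" "col z y = Blue" "col x y = Red" "col y x = Red" "col x z = Red"
        "col z x = Red" "arc y x" "arc z x"
      by (elim cherryE[OF valid]) blast
    then have "?h x y z = 1" "?h x z y = 1"
      by (simp_all add: arc_weight_def colour_weight_def)
    moreover have "0 \<le> ?h u v w" for u v w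
      by (simp add: arc_weight_def colour_weight_def)
    ultimately have "2 \<le> sum_orderings ?h x y z"
      unfolding sum_orderings_def by (smt (verit))
    with S show "\<exists>x y z. S = {x, y, z} \<and> x \<noteq> y \<and> y \<noteq> z \<and> x \<noteq> z \<and> 2 \<le> sum_orderings ?h x y z"
      by blast
  qed (auto simp: cherries_def arc_weight_def colour_weight_def)
  also have "\<dots> = (\<Sum>y\<in>V. \<Sum>z\<in>V. \<Sum>x\<in>V. ?h x y z)"
    using sum_triple_rotate[of "\<lambda>y z x. ?h x y z" V] by simp
  finally show ?thesis
    by (simp add: sum_distrib_left mult.commute mult.left_commute)
qed

lemma card_cherries_le_sqrt:
  assumes fin: "finite V" and n2: "2 \<le> card V" and valid: "valid_colouring V col arc"
    and red: "real (card (col_pairs V col Red)) = 2 * \<alpha> * real (card V choose 2)"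
    and blue: "real (card (col_pairs V col Blue)) = \<beta> * real (card V choose 2)"
  shows "real (card (cherries V col arc)) \<le> 3 * \<alpha> * sqrt \<beta> * real (card V) ^ 3 / 6"
proof -
  let ?r = "arc_weight col arc Red" and ?b = "colour_weight col Blue"
  let ?m = "real (card V) * (real (card V) - 1)"
  have "0 \<le> \<alpha>" "0 \<le> \<beta>"
    using density_nonneg[OF n2 red] density_nonneg[OF n2 blue] by simp_all
  have "0 \<le> ?m"
    using n2 by simp
  have norm_r: "frobenius_norm V ?r = sqrt (\<alpha> * ?m)"
    using sum_arc_weight_density[OF fin valid _ red]
    by (simp add: frobenius_norm_idempotent_entries arc_weight_def)
  have norm_b: "frobenius_norm V ?b = sqrt (\<beta> * ?m)"
    using sum_colour_weight_density[OF fin valid blue]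
    by (simp add: frobenius_norm_idempotent_entries colour_weight_def)
  have "2 * real (card (cherries V col arc))
      \<le> (\<Sum>y\<in>V. \<Sum>z\<in>V. ?b y z * (\<Sum>x\<in>V. ?r y x * (\<lambda>x z. ?r z x) x z))"
    using two_card_cherries_le[OF fin valid] by simp
  also have "\<dots> \<le> frobenius_norm V ?b * frobenius_norm V ?r * frobenius_norm V (\<lambda>x z. ?r z x)"
    by (rule sum_trace_product_le)
  also have "\<dots> = sqrt (\<beta> * ?m) * (\<alpha> * ?m)"
    using frobenius_norm_transpose[of V ?r] \<open>0 \<le> \<alpha>\<close> \<open>0 \<le> ?m\<close>
    by (simp add: norm_r norm_b mult.assoc)
  also have "\<dots> = \<alpha> * sqrt \<beta> * (?m * sqrt ?m)"
    by (simp only: real_sqrt_mult[of \<beta> ?m] ac_simps)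
  also have "\<dots> \<le> \<alpha> * sqrt \<beta> * real (card V) ^ 3"
    using \<open>0 \<le> \<alpha>\<close> \<open>0 \<le> \<beta>\<close> by (intro mult_left_mono ordered_pairs_three_halves_le_cube) auto
  finally show ?thesis
    by simp
qed

lemma card_cherries_le_parallel_sum:
  assumes fin: "finite V" and n2: "2 \<le> card V" and valid: "valid_colouring V col arc"
    and red: "real (card (col_pairs V col Red)) = 2 * \<alpha> * real (card V choose 2)"
    and blue: "real (card (col_pairs V col Blue)) = \<beta> * real (card V choose 2)"
  shows "real (card (cherries V col arc)) \<le> 3 * parallel_sum \<alpha> \<beta> * real (card V) ^ 3 / 6"
proof -
  let ?r = "arc_weight col arc Red" and ?b = "colour_weight col Blue"
  let ?n = "real (card V)"
  let ?m = "?n * (?n - 1)"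
  define R where "R y = (\<Sum>x\<in>V. ?r y x)" for y
  define B where "B y = (\<Sum>x\<in>V. ?b y x)" for y
  have "0 \<le> \<alpha>" "0 \<le> \<beta>"
    using density_nonneg[OF n2 red] density_nonneg[OF n2 blue] by simp_all
  have degrees: "0 \<le> R y \<and> 0 \<le> B y \<and> R y + B y \<le> ?n" for y
  proof -
    have "R y + B y = (\<Sum>x\<in>V. ?r y x + ?b y x)"
      by (simp add: R_def B_def sum.distrib)
    also have "\<dots> \<le> (\<Sum>x\<in>V. 1)"
      by (intro sum_mono) (simp add: arc_weight_def colour_weight_def)
    finally show ?thesis
      by (simp add: R_def B_def arc_weight_def colour_weight_def sum_nonneg)
  qed
  have "2 * real (card (cherries V col arc))
      \<le> (\<Sum>y\<in>V. \<Sum>z\<in>V. ?b y z * (\<Sum>x\<in>V. ?r y x * ?r z x))"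
    by (rule two_card_cherries_le[OF fin valid])
  also have "\<dots> \<le> (\<Sum>y\<in>V. \<Sum>z\<in>V. ?b y z * R y)"
    unfolding R_def
    by (intro sum_mono mult_left_mono) (simp_all add: arc_weight_def colour_weight_def)
  also have "\<dots> = (\<Sum>y\<in>V. R y * B y)"
    by (simp add: B_def sum_distrib_left mult.commute)
  also have "\<dots> \<le> ?n * parallel_sum (\<Sum>y\<in>V. R y) (\<Sum>y\<in>V. B y)"
    using degrees by (intro sum_mult_le_parallel_sum fin) blast
  also have "\<dots> = ?n * parallel_sum (\<alpha> * ?m) (\<beta> * ?m)"
    using sum_arc_weight_density[OF fin valid _ red] sum_colour_weight_density[OF fin valid blue]
    by (simp add: R_def B_def)
  also have "\<dots> = ?n * ?m * parallel_sum \<alpha> \<beta>"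
    using parallel_sum_scale[of ?m \<alpha> \<beta>] by (simp add: ac_simps)
  also have "\<dots> \<le> ?n ^ 3 * parallel_sum \<alpha> \<beta>"
    using \<open>0 \<le> \<alpha>\<close> \<open>0 \<le> \<beta>\<close>
    by (intro mult_right_mono parallel_sum_nonneg) (auto simp: power3_eq_cube algebra_simps)
  finally show ?thesis
    by (simp add: ac_simps)
qed

definition red_blue_weight ::
  "real \<Rightarrow> ('a \<Rightarrow> 'a \<Rightarrow> colour) \<Rightarrow> ('a \<Rightarrow> 'a \<Rightarrow> bool) \<Rightarrow> 'a \<Rightarrow> 'a \<Rightarrow> real" where
  "red_blue_weight s col arc x y = arc_weight col arc Red x y - s * colour_weight col Blue x y"

lemma red_blue_weight_pair_cases:
  assumes "valid_colouring V col arc" and "x \<in> V" and "y \<in> V"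
  shows "(red_blue_weight s col arc x y, red_blue_weight s col arc y x)
    \<in> {(1, 0), (0, 1), (- s, - s), (0, 0)}"
  using valid_colouring_sym[OF assms] valid_colouring_arc[OF assms]
  by (cases "col x y") (auto simp: red_blue_weight_def arc_weight_def colour_weight_def)

lemma vertex_products_red_blue_weight_cherry:
  assumes valid: "valid_colouring V col arc" and "S \<in> cherries V col arc"
  shows "\<exists>x y z. S = {x, y, z} \<and> x \<noteq> y \<and> y \<noteq> z \<and> x \<noteq> z
    \<and> vertex_products (red_blue_weight s col arc) x y z = - 2 * s"
proof -
  obtain x y z where S: "S = {x, y, z}" "x \<noteq> y" "y \<noteq> z" "x \<noteq> z"
    and "col y z = Blue" "col z y = Blue" "col x y = Red" "col y x = Red" "col x z = Red" "col z x = Red"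
    and "arc y x" "arc z x" "\<not> arc x y" "\<not> arc x z"
    using assms(2) by (elim cherryE[OF valid]) blast
  then have "vertex_products (red_blue_weight s col arc) x y z = - 2 * s"
    by (simp add: vertex_products_def red_blue_weight_def arc_weight_def colour_weight_def)
  with S show ?thesis
    by blast
qed

lemma card_cherries_le_absolute:
  assumes fin: "finite V" and valid: "valid_colouring V col arc"
  shows "real (card (cherries V col arc)) \<le> 0.465 * real (card V) ^ 3 / 6"
proof -
  \<comment> \<open>\<open>s\<close> is a rational just below \<open>1 / sqrt 3\<close>, the largest value for which three blue pairs
    keep \<open>vertex_products = 3 s\<^sup>2 \<le> 1\<close>; a cherry then weighs \<open>6 (1 + 2 s) = 6 \<cdot> 269/125\<close>,
    and \<open>125/269 < 0.465\<close>.\<close>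
  define s :: real where "s = 72/125"
  let ?\<phi> = "red_blue_weight s col arc"
  have "(\<Sum>S\<in>cherries V col arc. 6 * (1 + 2 * s)) \<le> real (card V) ^ 3"
  proof (rule sum_3sets_le_cube[OF fin])
    show "\<bar>?\<phi> x y\<bar> \<le> 1" for x y
      by (simp add: s_def red_blue_weight_def arc_weight_def colour_weight_def)
    show "vertex_products ?\<phi> x y z \<le> 1" if "x \<in> V" "y \<in> V" "z \<in> V" for x y z
      using red_blue_weight_pair_cases[OF valid, of x y s] red_blue_weight_pair_cases[OF valid, of y z s]
        red_blue_weight_pair_cases[OF valid, of x z s] that
      unfolding vertex_products_def s_def by auto
    show "\<exists>x y z. S = {x, y, z} \<and> x \<noteq> y \<and> y \<noteq> z \<and> x \<noteq> z
        \<and> 6 * (1 + 2 * s) \<le> 6 * (1 - vertex_products ?\<phi> x y z)" if "S \<in> cherries V col arc" for S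
      using vertex_products_red_blue_weight_cherry[OF valid that, of s] by fastforce
  qed (auto simp: cherries_def red_blue_weight_def arc_weight_def colour_weight_def)
  then show ?thesis
    by (simp add: s_def)
qed

definition purple_orientation :: "('a \<Rightarrow> 'a \<Rightarrow> colour) \<Rightarrow> ('a \<Rightarrow> 'a \<Rightarrow> bool) \<Rightarrow> 'a \<Rightarrow> 'a \<Rightarrow> real" where
  "purple_orientation col arc x y = arc_weight col arc Purple x y - arc_weight col arc Purple y x"

lemma purple_orientation_antisym: "purple_orientation col arc y x = - purple_orientation col arc x y"
  by (simp add: purple_orientation_def)

lemma purple_orientation_cases: "purple_orientation col arc x y \<in> {-1, 0, 1}"
  by (auto simp: purple_orientation_def arc_weight_def)

lemma vertex_products_purple_orientation_le: "vertex_products (purple_orientation col arc) x y z \<le> 1"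
  using purple_orientation_cases[of col arc x y] purple_orientation_cases[of col arc y z]
    purple_orientation_cases[of col arc x z] purple_orientation_antisym[of col arc x y]
    purple_orientation_antisym[of col arc y z] purple_orientation_antisym[of col arc x z]
  by (auto simp: vertex_products_def)

lemma vertex_products_purple_orientation_cyclic:
  assumes valid: "valid_colouring V col arc" and "S \<in> purple_cyclic_triangles V col arc"
  shows "\<exists>x y z. S = {x, y, z} \<and> x \<noteq> y \<and> y \<noteq> z \<and> x \<noteq> z
    \<and> vertex_products (purple_orientation col arc) x y z = -3"
proof -
  obtain x y z where S: "S = {x, y, z}" "x \<in> V" "y \<in> V" "z \<in> V" "x \<noteq> y" "y \<noteq> z" "x \<noteq> z"
    and colours: "col x y = Purple" "col y z = Purple" "col z x = Purple"
    and arcs: "arc x y" "arc y z" "arc z x"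
    using assms by (rule purple_cyclic_triangleE)
  have "\<not> arc y x" "\<not> arc z y" "\<not> arc x z"
    using valid_colouring_arc[OF valid S(2,3,5)] valid_colouring_arc[OF valid S(3,4,6)]
      valid_colouring_arc[OF valid S(4,2)] S(7) colours arcs by auto
  with S colours arcs have "purple_orientation col arc x y = 1" "purple_orientation col arc y z = 1"
    "purple_orientation col arc z x = 1"
    by (simp_all add: purple_orientation_def arc_weight_def)
  with S show ?thesis
    using purple_orientation_antisym[of col arc x y] purple_orientation_antisym[of col arc y z]
      purple_orientation_antisym[of col arc z x]
    by (intro exI[of _ x] exI[of _ y] exI[of _ z]) (simp add: vertex_products_def)
qed

lemma vertex_products_purple_orientation_no_purple:
  assumes valid: "valid_colouring V col arc" and "S \<in> green_triangles V col \<union> cherries V col arc"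
  shows "\<exists>x y z. S = {x, y, z} \<and> x \<noteq> y \<and> y \<noteq> z \<and> x \<noteq> z
    \<and> vertex_products (purple_orientation col arc) x y z = 0"
proof -
  obtain x y z where S: "S = {x, y, z}" "x \<in> V" "y \<in> V" "z \<in> V" "x \<noteq> y" "y \<noteq> z" "x \<noteq> z"
    and "col x y \<noteq> Purple" "col y z \<noteq> Purple" "col x z \<noteq> Purple"
    using assms(2) by (rule green_triangle_or_cherryE)
  moreover have "col y x = col x y" "col z y = col y z" "col z x = col x z"
    using valid_colouring_sym[OF valid] S(2-4) by blast+
  ultimately have "purple_orientation col arc x y = 0" "purple_orientation col arc y z = 0"
    "purple_orientation col arc x z = 0"
    by (simp_all add: purple_orientation_def arc_weight_def)
  with S show ?thesis
    using purple_orientation_antisym[of col arc x y] purple_orientation_antisym[of col arc y z]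
      purple_orientation_antisym[of col arc x z]
    by (intro exI[of _ x] exI[of _ y] exI[of _ z]) (simp add: vertex_products_def)
qed

lemma card_purple_cyclic_green_cherries_le:
  assumes fin: "finite V" and valid: "valid_colouring V col arc"
  shows "real (card (purple_cyclic_triangles V col arc))
      + 1/4 * (real (card (green_triangles V col)) + real (card (cherries V col arc)))
    \<le> 1/4 * real (card V) ^ 3 / 6"
proof -
  let ?P = "purple_cyclic_triangles V col arc" and ?G = "green_triangles V col"
    and ?C = "cherries V col arc"
  define c :: "'a set \<Rightarrow> real" where "c S = (if S \<in> ?P then 24 else 6)" for S
  have families: "?P \<subseteq> Pow V" "?G \<subseteq> Pow V" "?C \<subseteq> Pow V"
    by (auto simp: purple_cyclic_triangles_def green_triangles_def cherries_def)
  have "(\<Sum>S\<in>?P \<union> (?G \<union> ?C). c S) \<le> real (card V) ^ 3"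
  proof (rule sum_3sets_le_cube[OF fin])
    show "purple_orientation col arc x x = 0" for x
      by (simp add: purple_orientation_def)
    show "\<bar>purple_orientation col arc x y\<bar> \<le> 1" for x y
      using purple_orientation_cases[of col arc x y] by auto
    fix S
    assume "S \<in> ?P \<union> (?G \<union> ?C)"
    then obtain x y z where S: "S = {x, y, z}" "x \<noteq> y" "y \<noteq> z" "x \<noteq> z"
      and "vertex_products (purple_orientation col arc) x y z = (if S \<in> ?P then -3 else 0)"
      using vertex_products_purple_orientation_cyclic[OF valid, of S]
        vertex_products_purple_orientation_no_purple[OF valid, of S]
      by (cases "S \<in> ?P") auto
    then show "\<exists>x y z. S = {x, y, z} \<and> x \<noteq> y \<and> y \<noteq> z \<and> x \<noteq> z
        \<and> c S \<le> 6 * (1 - vertex_products (purple_orientation col arc) x y z)"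
      by (intro exI[of _ x] exI[of _ y] exI[of _ z]) (simp add: c_def)
  qed (use families vertex_products_purple_orientation_le in auto)
  moreover have "(\<Sum>S\<in>?P \<union> (?G \<union> ?C). c S) = 24 * real (card ?P) + 6 * (real (card ?G) + real (card ?C))"
  proof -
    have "finite ?P" "finite ?G" "finite ?C"
      using families fin by (meson finite_Pow_iff finite_subset)+
    moreover have "(\<Sum>S\<in>?G \<union> ?C. c S) = (\<Sum>S\<in>?G \<union> ?C. 6)"
      using purple_cyclic_triangles_disjoint[OF valid] by (intro sum.cong) (auto simp: c_def)
    moreover have "card (?G \<union> ?C) = card ?G + card ?C"
      using calculation(2,3) green_triangles_cherries_disjoint by (rule card_Un_disjoint)
    ultimately show ?thesis
      using purple_cyclic_triangles_disjoint[OF valid] by (simp add: sum.union_disjoint c_def)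
  qed
  ultimately show ?thesis
    by (simp add: field_simps)
qed

theorem lemma5p1:
  fixes V :: "'a set" and col :: "'a \<Rightarrow> 'a \<Rightarrow> colour" and arc :: "'a \<Rightarrow> 'a \<Rightarrow> bool"
    and \<alpha> \<beta> \<gamma> \<delta> :: real
  assumes fin: "finite V" and n2: "card V \<ge> 2"
    and valid: "valid_colouring V col arc"
    and red: "real (card (col_pairs V col Red)) = 2 * \<alpha> * real (card V choose 2)"
    and blue: "real (card (col_pairs V col Blue)) = \<beta> * real (card V choose 2)"
    and green: "real (card (col_pairs V col Green)) = \<gamma> * real (card V choose 2)"
    and purple: "real (card (col_pairs V col Purple)) = 2 * \<delta> * real (card V choose 2)"
  shows
   "real (card (green_triangles V col)) \<le> \<gamma> powr (3/2) * real (card V) ^ 3 / 6 \<and>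
    real (card (purple_cyclic_triangles V col arc)) \<le> 2 * \<delta> powr (3/2) * real (card V) ^ 3 / 6 \<and>
    real (card (cherries V col arc)) \<le> 3 * \<alpha> * sqrt \<beta> * real (card V) ^ 3 / 6 \<and>
    real (card (cherries V col arc)) \<le> 0.465 * real (card V) ^ 3 / 6 \<and>
    real (card (purple_cyclic_triangles V col arc))
      + 1/4 * (real (card (green_triangles V col)) + real (card (cherries V col arc)))
      \<le> 1/4 * real (card V) ^ 3 / 6 \<and>
    real (card (cherries V col arc))
      \<le> (if \<alpha> = 0 \<and> \<beta> = 0 then 0 else 3 * \<alpha> * \<beta> / (\<alpha> + \<beta>)) * real (card V) ^ 3 / 6"
proof -
  have "(if \<alpha> = 0 \<and> \<beta> = 0 then 0 else 3 * \<alpha> * \<beta> / (\<alpha> + \<beta>)) = 3 * parallel_sum \<alpha> \<beta>"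
    by (simp add: parallel_sum_def)
  then show ?thesis
    using card_green_triangles_le[OF fin n2 valid green]
      card_purple_cyclic_triangles_le[OF fin n2 valid purple]
      card_cherries_le_sqrt[OF fin n2 valid red blue]
      card_cherries_le_absolute[OF fin valid]
      card_purple_cyclic_green_cherries_le[OF fin valid]
      card_cherries_le_parallel_sum[OF fin n2 valid red blue]
    by simp
qed

end
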